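(* Let $\sigma>0$, $\eta>0$, $\hat\alpha>0$, $h>0$, $r\ge0$, $a\in\mathbb{R}$, and for $\beta\ge0$ let $v_\beta$ denote the unique $C^1[0,\infty)$ solution of $\frac{\sigma^2}2v'(y)=\beta+\frac{\hat\alpha}4v(y)^2+\eta y(v(y)-\frac h\eta)-av(y)$, $y\ge0$, $v(0)=-r$. Let $\underline\beta_2=-ar-\frac{\hat\alpha r^2}4$. Then: (i) if $a>-\frac{\hat\alpha}4r$ and $\beta\ge0$, then $\beta\in\mathcal D_1$ if and only if there exists $x_0\in(0,\infty)$ with $v_\beta'(x_0)<0$; (ii) if $a\le-\frac{\hat\alpha}4r$ and $\beta>\underline\beta_2$, then $\beta\in\mathcal D_2$ if and only if there exists $x_0\in(0,\infty)$ with $v_\beta'(x_0)<0$.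
   Context: $\mathcal D_1=\{\beta\ge0:\exists x_\beta\ge0$ such that $v_\beta$ is nondecreasing on $(0,x_\beta)$ and decreasing on $(x_\beta,\infty)\}$ and $\mathcal D_2=\{\beta>\underline\beta_2:\exists x_\beta\ge0$ such that $v_\beta$ is nondecreasing on $(0,x_\beta)$ and decreasing on $(x_\beta,\infty)\}$. *)

theory Defs
  imports "HOL-Analysis.Analysis"
begin

definition is_vsol :: "real \<Rightarrow> real \<Rightarrow> real \<Rightarrow> real \<Rightarrow> real \<Rightarrow> real \<Rightarrow> real \<Rightarrow> (real \<Rightarrow> real) \<Rightarrow> bool" where
  "is_vsol \<sigma> \<eta> \<alpha> h r a \<beta> v \<longleftrightarrow>
     v 0 = - r \<and>
     (\<forall>y\<ge>0. (v has_real_derivative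
        ((2 / \<sigma>\<^sup>2) * (\<beta> + (\<alpha> / 4) * (v y)\<^sup>2 + \<eta> * y * (v y - h / \<eta>) - a * v y)))
        (at y within {0..}))"

definition up_down_shape :: "(real \<Rightarrow> real) \<Rightarrow> bool" where
  "up_down_shape v \<longleftrightarrow> (\<exists>x\<ge>0. mono_on {0<..<x} v \<and>
      (\<forall>s t. x < s \<longrightarrow> s < t \<longrightarrow> v t < v s))"

definition in_D1 :: "real \<Rightarrow> (real \<Rightarrow> real) \<Rightarrow> bool" where
  "in_D1 \<beta> v \<longleftrightarrow> \<beta> \<ge> 0 \<and> up_down_shape v"

definition beta2_low :: "real \<Rightarrow> real \<Rightarrow> real \<Rightarrow> real" where
  "beta2_low \<alpha> r a = - a * r - \<alpha> * r\<^sup>2 / 4"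

definition in_D2 :: "real \<Rightarrow> real \<Rightarrow> real \<Rightarrow> real \<Rightarrow> (real \<Rightarrow> real) \<Rightarrow> bool" where
  "in_D2 \<alpha> r a \<beta> v \<longleftrightarrow> \<beta> > beta2_low \<alpha> r a \<and> up_down_shape v"

end

theory Submission
  imports Defs
begin

text \<open>Write \<open>v' = (2/\<sigma>\<^sup>2) w\<close> with \<open>w(y) = \<beta> + \<alpha>/4 v(y)\<^sup>2 + \<eta> y (v(y) - k) - a v(y)\<close> and \<open>k = h/\<eta>\<close>.
  Since \<open>v' < 0\<close> exactly where \<open>w < 0\<close>, the up-down shape amounts to: once \<open>w\<close> is negative, it
  stays negative. At a first zero \<open>z\<close> of \<open>w\<close> after a negative stretch, \<open>w'(z) = \<eta> (v(z) - k)\<close>,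
  so \<open>v(z) \<ge> k\<close>. Equality is impossible: \<open>v - k\<close> would then solve a linear equation, which by
  Gronwall cannot vanish at \<open>z\<close> since \<open>v(0) - k = -r - k < 0\<close>. If \<open>v(z) > k\<close>, then \<open>w\<close> turns
  positive with \<open>v > k\<close>, after which \<open>w\<close> and \<open>v\<close> keep increasing, the term \<open>\<eta> y (v - k)\<close>
  eventually dominates, and \<open>v' \<ge> (\<alpha>/4\<sigma>\<^sup>2) v\<^sup>2\<close> makes \<open>v\<close> blow up in finite time, which is
  impossible for a solution on \<open>[0,\<infinity>)\<close>.\<close>

lemma first_root_from_below:
  fixes f :: "real \<Rightarrow> real"
  assumes "p < q" "continuous_on {p..q} f" "f p < 0" "0 \<le> f q"
  obtains z where "p < z" "z \<le> q" "f z = 0" "\<And>y. p \<le> y \<Longrightarrow> y < z \<Longrightarrow> f y < 0"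
proof -
  define S where "S = {p..q} \<inter> f -` {0..}"
  have "closed S"
    unfolding S_def by (rule continuous_closed_preimage[OF assms(2)]) auto
  moreover have "q \<in> S" "bdd_below S"
    using assms unfolding S_def by (auto intro: bdd_belowI[of _ p])
  ultimately have zS: "Inf S \<in> S"
    by (intro closed_contains_Inf) auto
  have below: "f y < 0" if "p \<le> y" "y < Inf S" for y
    using that zS cInf_lower[OF _ \<open>bdd_below S\<close>, of y] unfolding S_def by force
  have "Inf S \<noteq> p"
    using zS assms(3) by (auto simp: S_def)
  with zS have "p < Inf S"
    by (auto simp: S_def)
  moreover have "continuous_on {p..Inf S} f"
    using assms(2) zS unfolding S_def by (auto intro: continuous_on_subset)
  ultimately obtain x where x: "p \<le> x" "x \<le> Inf S" "f x = 0"
    using IVT'[of f p 0 "Inf S"] zS assms(3) unfolding S_def by auto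
  with below have "x = Inf S"
    by force
  with x zS below \<open>p < Inf S\<close> show thesis
    by (intro that) (auto simp: S_def)
qed

lemma DERIV_nonneg_at_root_from_below:
  fixes f :: "real \<Rightarrow> real"
  assumes "p < z" "f z = 0" "\<And>y. p \<le> y \<Longrightarrow> y < z \<Longrightarrow> f y < 0" "DERIV f z :> l"
  shows "0 \<le> l"
proof (rule ccontr)
  assume "\<not> 0 \<le> l"
  then obtain d where d: "0 < d" "\<And>t. 0 < t \<Longrightarrow> t < d \<Longrightarrow> f z < f (z - t)"
    using DERIV_neg_dec_left[OF assms(4)] by force
  define t where "t = min (d / 2) (z - p)"
  have "0 < t" "t < d" "p \<le> z - t"
    using d assms(1) by (auto simp: t_def)
  then show False
    using d(2)[of t] assms(2) assms(3)[of "z - t"] by simp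
qed

lemma linear_ODE_solution_nonvanishing:
  fixes u g :: "real \<Rightarrow> real"
  assumes "s \<le> t" "continuous_on {s..t} u" "continuous_on {s..t} g"
    and deriv: "\<And>y. s < y \<Longrightarrow> y < t \<Longrightarrow> (u has_real_derivative g y * u y) (at y)"
    and "u s \<noteq> 0"
  shows "u t \<noteq> 0"
proof -
  have "bounded (g ` {s..t})"
    by (intro compact_imp_bounded compact_continuous_image assms(3) compact_Icc)
  then obtain M where M: "\<forall>y\<in>{s..t}. \<bar>g y\<bar> \<le> M"
    by (auto simp: bounded_real)
  define \<phi> where "\<phi> y = (u y)\<^sup>2 * exp (2 * M * y)" for y
  have "\<phi> s \<le> \<phi> t"
  proof (rule DERIV_nonneg_imp_increasing_open[OF assms(1)])
    fix y assume y: "s < y" "y < t"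
    have "(\<phi> has_real_derivative 2 * (u y)\<^sup>2 * exp (2 * M * y) * (g y + M)) (at y)"
      unfolding \<phi>_def[abs_def]
      by (rule derivative_eq_intros deriv[OF y] refl)+ (simp add: algebra_simps power2_eq_square)
    moreover have "0 \<le> 2 * (u y)\<^sup>2 * exp (2 * M * y) * (g y + M)"
    proof -
      have "\<bar>g y\<bar> \<le> M"
        using M y by simp
      then have "0 \<le> g y + M"
        by linarith
      then show ?thesis
        by simp
    qed
    ultimately show "\<exists>l. (\<phi> has_real_derivative l) (at y) \<and> 0 \<le> l"
      by blast
  qed (unfold \<phi>_def, intro continuous_intros assms(2))
  moreover have "0 < \<phi> s"
    using assms(5) by (simp add: \<phi>_def)
  ultimately show ?thesis
    by (auto simp: \<phi>_def)
qed

lemma no_global_solution_of_riccati_inequality: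
  fixes f f' :: "real \<Rightarrow> real"
  assumes "0 < K" "0 < f Y"
    and deriv: "\<And>y. Y \<le> y \<Longrightarrow> (f has_real_derivative f' y) (at y)"
    and riccati: "\<And>y. Y \<le> y \<Longrightarrow> K * (f y)\<^sup>2 \<le> f' y"
  shows False
proof -
  have cont: "continuous_on {Y..t} f" for t
    using deriv by (intro continuous_at_imp_continuous_on ballI DERIV_isCont) auto
  have pos: "0 < f y" if "Y \<le> y" for y
  proof -
    have "f Y \<le> f y"
    proof (rule DERIV_nonneg_imp_increasing_open[OF that _ cont])
      fix x assume "Y < x"
      then show "\<exists>l. (f has_real_derivative l) (at x) \<and> 0 \<le> l"
        using deriv[of x] riccati[of x] assms(1)
        by (intro exI[of _ "f' x"]) (auto intro: order_trans[rotated])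
    qed
    with assms(2) show ?thesis
      by simp
  qed
  \<comment> \<open>\<open>-1/f(y) - K y\<close> is nondecreasing, so \<open>1/f\<close> would reach \<open>0\<close> by time \<open>t\<close>\<close>
  define t where "t = Y + 1 / (K * f Y)"
  have "- 1 / f Y - K * Y \<le> - 1 / f t - K * t"
  proof (rule DERIV_nonneg_imp_increasing_open[where f = "\<lambda>y. - 1 / f y - K * y"])
    show "Y \<le> t"
      using assms(1,2) by (simp add: t_def)
    show "continuous_on {Y..t} (\<lambda>y. - 1 / f y - K * y)"
      using pos by (intro continuous_intros cont) (auto simp: less_imp_neq[symmetric])
  next
    fix y assume "Y < y" "y < t"
    then have y: "Y \<le> y" "0 < f y"
      using pos by auto
    have "((\<lambda>y. - 1 / f y - K * y) has_real_derivative f' y / (f y)\<^sup>2 - K) (at y)"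
      using y by (auto intro!: derivative_eq_intros deriv simp: field_simps power2_eq_square)
    moreover have "0 \<le> f' y / (f y)\<^sup>2 - K"
      using riccati[OF y(1)] y(2) by (simp add: field_simps)
    ultimately show "\<exists>l. ((\<lambda>y. - 1 / f y - K * y) has_real_derivative l) (at y) \<and> 0 \<le> l"
      by blast
  qed
  moreover have "- 1 / f Y - K * Y = - K * t"
    using assms(1,2) by (simp add: t_def field_simps)
  ultimately have "1 / f t \<le> 0"
    by simp
  with pos[of t] assms(1,2) show False
    by (simp add: t_def)
qed

locale vsol =
  fixes \<sigma> \<eta> \<alpha> h r a \<beta> :: real and v :: "real \<Rightarrow> real"
  assumes \<sigma>_pos: "0 < \<sigma>" and \<eta>_pos: "0 < \<eta>" and \<alpha>_pos: "0 < \<alpha>" and h_pos: "0 < h"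
    and r_nonneg: "0 \<le> r"
    and solves: "is_vsol \<sigma> \<eta> \<alpha> h r a \<beta> v"
begin

definition c :: real where "c = 2 / \<sigma>\<^sup>2"

definition k :: real where "k = h / \<eta>"

definition w :: "real \<Rightarrow> real" where
  "w y = \<beta> + \<alpha> / 4 * (v y)\<^sup>2 + \<eta> * y * (v y - k) - a * v y"

lemma c_pos: "0 < c"
  using \<sigma>_pos by (simp add: c_def)

lemma k_pos: "0 < k"
  using \<eta>_pos h_pos by (simp add: k_def)

lemma v_at_0: "v 0 = - r"
  using solves by (simp add: is_vsol_def)

lemma v_has_deriv_within:
  assumes "0 \<le> y"
  shows "(v has_real_derivative c * w y) (at y within {0..})"
proof -
  have "\<forall>y\<ge>0. (v has_real_derivative c * w y) (at y within {0..})"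
    using solves unfolding is_vsol_def c_def w_def k_def by (rule conjunct2)
  with assms show ?thesis
    by blast
qed

lemma v_has_deriv:
  assumes "0 < y"
  shows "(v has_real_derivative c * w y) (at y)"
proof -
  have "at y within {0..} = at y"
    using assms by (intro at_within_interior) auto
  with v_has_deriv_within[of y] assms show ?thesis
    by simp
qed

lemma deriv_v_neg_iff:
  assumes "0 < y"
  shows "deriv v y < 0 \<longleftrightarrow> w y < 0"
proof -
  have "deriv v y = c * w y"
    using assms by (intro DERIV_imp_deriv v_has_deriv)
  with c_pos show ?thesis
    by (simp add: mult_less_0_iff)
qed

lemma continuous_on_v:
  assumes "0 \<le> s"
  shows "continuous_on {s..t} v"
proof (rule continuous_on_subset)
  show "continuous_on {0..} v"
    unfolding continuous_on_eq_continuous_within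
    using v_has_deriv_within DERIV_continuous by blast
qed (use assms in auto)

lemma continuous_on_w: "0 \<le> s \<Longrightarrow> continuous_on {s..t} w"
  unfolding w_def[abs_def] by (intro continuous_intros continuous_on_v)

lemma w_has_deriv:
  assumes "0 < y"
  shows "(w has_real_derivative (\<alpha> / 2 * v y + \<eta> * y - a) * (c * w y) + \<eta> * (v y - k)) (at y)"
proof -
  have "((\<lambda>y. \<beta> + \<alpha> / 4 * (v y)\<^sup>2 + \<eta> * y * (v y - k) - a * v y) has_real_derivative
      (\<alpha> / 2 * v y + \<eta> * y - a) * (c * w y) + \<eta> * (v y - k)) (at y)"
    by (rule derivative_eq_intros v_has_deriv[OF assms] refl)+ (simp add: algebra_simps)
  then show ?thesis
    unfolding w_def[abs_def, symmetric] .
qed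

lemma v_mono_where_w_nonneg:
  assumes "0 \<le> s" "s \<le> t" "\<And>y. s < y \<Longrightarrow> y < t \<Longrightarrow> 0 \<le> w y"
  shows "v s \<le> v t"
proof (rule DERIV_nonneg_imp_increasing_open[OF assms(2) _ continuous_on_v[OF assms(1)]])
  fix y assume "s < y" "y < t"
  then show "\<exists>l. (v has_real_derivative l) (at y) \<and> 0 \<le> l"
    using assms(1) assms(3)[of y] v_has_deriv[of y] c_pos by (intro exI[of _ "c * w y"]) simp
qed

lemma v_decreasing_where_w_neg:
  assumes "0 \<le> s" "s < t" "\<And>y. s < y \<Longrightarrow> y < t \<Longrightarrow> w y < 0"
  shows "v t < v s"
proof (rule DERIV_neg_imp_decreasing_open[OF assms(2) _ continuous_on_v[OF assms(1)]])
  fix y assume "s < y" "y < t"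
  then show "\<exists>l. (v has_real_derivative l) (at y) \<and> l < 0"
    using assms(1) assms(3)[of y] v_has_deriv[of y] c_pos
    by (intro exI[of _ "c * w y"]) (simp add: mult_less_0_iff)
qed

lemma w_ge_quadratic:
  assumes "2 * a\<^sup>2 / \<alpha> - \<beta> \<le> \<eta> * y * (v y - k)"
  shows "\<alpha> / 8 * (v y)\<^sup>2 \<le> w y"
proof -
  have "w y - \<alpha> / 8 * (v y)\<^sup>2
      = \<alpha> / 8 * (v y - 4 * a / \<alpha>)\<^sup>2 + (\<beta> - 2 * a\<^sup>2 / \<alpha>) + \<eta> * y * (v y - k)"
    using \<alpha>_pos by (simp add: w_def field_simps power2_eq_square)
  moreover have "0 \<le> \<alpha> / 8 * (v y - 4 * a / \<alpha>)\<^sup>2"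
    using \<alpha>_pos by simp
  ultimately show ?thesis
    using assms by linarith
qed

lemma w_nonzero_at_level_k:
  assumes "0 < z" "v z = k"
  shows "w z \<noteq> 0"
proof
  assume "w z = 0"
  then have \<beta>_eq: "\<beta> = a * k - \<alpha> / 4 * k\<^sup>2"
    using assms(2) by (simp add: w_def)
  define g where "g y = c * (\<alpha> / 4 * (v y + k) + \<eta> * y - a)" for y
  have factor: "c * w y = g y * (v y - k)" for y
    unfolding w_def by (simp add: g_def \<beta>_eq field_simps power2_eq_square)
  have "v z - k \<noteq> 0"
  proof (rule linear_ODE_solution_nonvanishing[where u = "\<lambda>y. v y - k" and g = g])
    show "continuous_on {0..z} (\<lambda>y. v y - k)" "continuous_on {0..z} g"
      unfolding g_def by (intro continuous_intros continuous_on_v order_refl)+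
    show "((\<lambda>y. v y - k) has_real_derivative g y * (v y - k)) (at y)" if "0 < y" "y < z" for y
      using DERIV_diff[OF v_has_deriv[OF that(1)] DERIV_const[of k]] by (simp add: factor)
    show "v 0 - k \<noteq> 0"
      using v_at_0 r_nonneg k_pos by simp
  qed (use assms(1) in simp)
  with assms(2) show False
    by simp
qed

lemma w_pos_after:
  assumes "0 < p" "0 < w p" "k < v p" "p \<le> y"
  shows "0 < w y"
proof (rule ccontr)
  assume "\<not> 0 < w y"
  then have "p < y" "0 \<le> - w y"
    using assms(2,4) by (auto simp: le_less)
  moreover have "continuous_on {p..y} (\<lambda>s. - w s)"
    using assms(1) by (intro continuous_intros continuous_on_w) simp
  ultimately obtain z where z: "p < z" "w z = 0" and before: "\<And>s. p \<le> s \<Longrightarrow> s < z \<Longrightarrow> 0 < w s"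
    using first_root_from_below[of p y "\<lambda>s. - w s"] assms(2) by auto
  have "((\<lambda>s. - w s) has_real_derivative - (\<eta> * (v z - k))) (at z)"
    using DERIV_minus[OF w_has_deriv[of z]] assms(1) z by simp
  then have "0 \<le> - (\<eta> * (v z - k))"
    using before z by (intro DERIV_nonneg_at_root_from_below[of p z "\<lambda>s. - w s"]) auto
  moreover have "v p \<le> v z"
    using assms(1) z(1) before by (intro v_mono_where_w_nonneg) (auto intro: less_imp_le)
  ultimately show False
    using assms(3) \<eta>_pos by (simp add: mult_le_0_iff)
qed

lemma w_nonpos_above_k:
  assumes "0 < p" "k < v p"
  shows "w p \<le> 0"
proof (rule ccontr)
  assume "\<not> w p \<le> 0"
  then have w_pos: "0 < w y" if "p \<le> y" for y
    using w_pos_after assms that by simp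
  have v_ge: "v p \<le> v y" if "p \<le> y" for y
    using that assms(1) by (intro v_mono_where_w_nonneg) (auto simp: less_imp_le w_pos)
  define \<delta> where "\<delta> = v p - k"
  have "0 < \<delta>"
    using assms(2) by (simp add: \<delta>_def)
  \<comment> \<open>from \<open>Y\<close> on, the linear term \<open>\<eta> y (v - k)\<close> absorbs the constants in \<open>w\<close>\<close>
  define Y where "Y = p + \<bar>2 * a\<^sup>2 / \<alpha> - \<beta>\<bar> / (\<eta> * \<delta>)"
  have "p \<le> Y"
    using \<open>0 < \<delta>\<close> \<eta>_pos by (simp add: Y_def)
  have riccati: "c * \<alpha> / 8 * (v y)\<^sup>2 \<le> c * w y" if "Y \<le> y" for y
  proof -
    have "2 * a\<^sup>2 / \<alpha> - \<beta> \<le> \<eta> * (Y - p) * \<delta>"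
      using \<open>0 < \<delta>\<close> \<eta>_pos by (simp add: Y_def)
    also have "\<dots> \<le> \<eta> * y * (v y - k)"
      using that \<open>p \<le> Y\<close> assms(1) v_ge[of y] \<eta>_pos \<open>0 < \<delta>\<close>
      by (intro mult_mono) (auto simp: \<delta>_def)
    finally have "\<alpha> / 8 * (v y)\<^sup>2 \<le> w y"
      by (rule w_ge_quadratic)
    with c_pos show ?thesis
      by (simp add: mult_left_mono)
  qed
  show False
  proof (rule no_global_solution_of_riccati_inequality[OF _ _ _ riccati])
    show "0 < c * \<alpha> / 8"
      using c_pos \<alpha>_pos by simp
    show "0 < v Y"
      using v_ge[OF \<open>p \<le> Y\<close>] assms(2) k_pos by simp
    show "(v has_real_derivative c * w y) (at y)" if "Y \<le> y" for y
      using that \<open>p \<le> Y\<close> assms(1) by (intro v_has_deriv) simp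
  qed
qed

lemma w_stays_neg:
  assumes "0 < p" "p < q" "w p < 0"
  shows "w q < 0"
proof (rule ccontr)
  assume "\<not> w q < 0"
  then obtain z where z: "p < z" "w z = 0" and before: "\<And>s. p \<le> s \<Longrightarrow> s < z \<Longrightarrow> w s < 0"
    using first_root_from_below[OF assms(2) continuous_on_w] assms by auto
  have w'z: "(w has_real_derivative \<eta> * (v z - k)) (at z)"
    using w_has_deriv[of z] assms(1) z by simp
  have "0 \<le> \<eta> * (v z - k)"
    by (rule DERIV_nonneg_at_root_from_below[OF z before w'z])
  moreover have "v z \<noteq> k"
    using w_nonzero_at_level_k assms(1) z by auto
  ultimately have "k < v z" "0 < \<eta> * (v z - k)"
    using \<eta>_pos by (auto simp: zero_le_mult_iff)
  \<comment> \<open>then \<open>w\<close> turns positive right after \<open>z\<close> while \<open>v\<close> stays above \<open>k\<close>\<close>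
  obtain d where d: "0 < d" "\<And>t. 0 < t \<Longrightarrow> t < d \<Longrightarrow> w z < w (z + t)"
    using DERIV_pos_inc_right[OF w'z \<open>0 < \<eta> * (v z - k)\<close>] by blast
  define z' where "z' = z + d / 2"
  have "0 < w z'"
    using d z(2) by (simp add: z'_def)
  moreover have "v z \<le> v z'"
  proof (rule v_mono_where_w_nonneg)
    fix y assume "z < y" "y < z'"
    then show "0 \<le> w y"
      using d(2)[of "y - z"] z(2) by (simp add: z'_def)
  qed (use assms(1) z d in \<open>auto simp: z'_def\<close>)
  ultimately show False
    using w_nonpos_above_k[of z'] \<open>k < v z\<close> assms(1) z(1) d(1) by (simp add: z'_def)
qed

lemma up_down_shape_iff: "up_down_shape v \<longleftrightarrow> (\<exists>x0>0. deriv v x0 < 0)"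
proof
  assume "up_down_shape v"
  then obtain x where "0 \<le> x" and decr: "\<And>s t. x < s \<Longrightarrow> s < t \<Longrightarrow> v t < v s"
    unfolding up_down_shape_def by blast
  show "\<exists>x0>0. deriv v x0 < 0"
  proof (rule ccontr)
    assume "\<not> (\<exists>x0>0. deriv v x0 < 0)"
    then have "0 \<le> w y" if "0 < y" for y
      using deriv_v_neg_iff[OF that] that by force
    then have "v (x + 1) \<le> v (x + 2)"
      using \<open>0 \<le> x\<close> by (intro v_mono_where_w_nonneg) auto
    with decr[of "x + 1" "x + 2"] show False
      by simp
  qed
next
  assume "\<exists>x0>0. deriv v x0 < 0"
  define T where "T = {y. 0 < y \<and> w y < 0}"
  have "bdd_below T"
    unfolding T_def by (rule bdd_belowI[of _ 0]) simp
  from \<open>\<exists>x0>0. deriv v x0 < 0\<close> have "T \<noteq> {}"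
    using deriv_v_neg_iff by (auto simp: T_def)
  \<comment> \<open>\<open>v\<close> turns at the first time \<open>w\<close> becomes negative\<close>
  define x where "x = Inf T"
  have "0 \<le> x"
    unfolding x_def using \<open>T \<noteq> {}\<close> by (intro cInf_greatest) (auto simp: T_def)
  moreover have "mono_on {0<..<x} v"
  proof (rule mono_onI)
    fix s t assume "s \<in> {0<..<x}" "t \<in> {0<..<x}" "s \<le> t"
    moreover have "0 \<le> w y" if "0 < y" "y < x" for y
      using that cInf_lower[OF _ \<open>bdd_below T\<close>, of y] by (force simp: T_def x_def)
    ultimately show "v s \<le> v t"
      by (intro v_mono_where_w_nonneg) auto
  qed
  moreover have "v t < v s" if st: "x < s" "s < t" for s t
  proof (rule v_decreasing_where_w_neg)
    obtain y0 where "y0 \<in> T" "y0 < s"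
      using cInf_less_iff[OF \<open>T \<noteq> {}\<close> \<open>bdd_below T\<close>] st(1) by (auto simp: x_def)
    then show "w y < 0" if "s < y" "y < t" for y
      using w_stays_neg[of y0 y] that by (auto simp: T_def)
  qed (use st \<open>0 \<le> x\<close> in auto)
  ultimately show "up_down_shape v"
    unfolding up_down_shape_def by blast
qed

end

theorem lemma12:
  fixes \<sigma> \<eta> \<alpha> h r a :: real
  assumes "\<sigma> > 0" "\<eta> > 0" "\<alpha> > 0" "h > 0" "r \<ge> 0"
  shows "(\<forall>\<beta> v. a > - (\<alpha> / 4) * r \<longrightarrow> \<beta> \<ge> 0 \<longrightarrow> is_vsol \<sigma> \<eta> \<alpha> h r a \<beta> v \<longrightarrow>
            (in_D1 \<beta> v \<longleftrightarrow> (\<exists>x0>0. deriv v x0 < 0)))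
       \<and> (\<forall>\<beta> v. a \<le> - (\<alpha> / 4) * r \<longrightarrow> \<beta> > beta2_low \<alpha> r a \<longrightarrow> is_vsol \<sigma> \<eta> \<alpha> h r a \<beta> v \<longrightarrow>
            (in_D2 \<alpha> r a \<beta> v \<longleftrightarrow> (\<exists>x0>0. deriv v x0 < 0)))"
proof -
  have "up_down_shape v \<longleftrightarrow> (\<exists>x0>0. deriv v x0 < 0)" if "is_vsol \<sigma> \<eta> \<alpha> h r a \<beta> v" for \<beta> v
    by (rule vsol.up_down_shape_iff[of \<sigma> \<eta> \<alpha> h r a \<beta>]) (simp add: vsol_def assms that)
  then show ?thesis
    unfolding in_D1_def in_D2_def by blast
qed

end
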